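(* Let $L_0$ be the Laplacian of a connected undirected simple graph on $n$ vertices with positive nominal edge weight vector $\omega_0$, with nonzero eigenvalues $0<\lambda_{0,2}\le\dots\le\lambda_{0,n}$. Fix $\tau>0$, $b\neq0$ and $\alpha_\omega\in[0,1)$ with $(1+\alpha_\omega)\lambda_{0,n}\tau<\pi/2$. Let $f_\tau(\lambda)=\frac{\cos(\lambda\tau)}{\lambda(1-\sin(\lambda\tau))}$ on $(0,\pi/(2\tau))$, let $\bar\lambda$ be its (unique) minimizer there, and set $$\chi^{\pm}(\lambda)=\frac{|f_\tau((1\pm\alpha_\omega)\lambda)-f_\tau(\lambda)|}{f_\tau(\lambda)}.$$ Consider uniformly scaled edge weights $\omega=s\,\omega_0$ with $s\in[1-\alpha_\omega,1+\alpha_\omega]$, with Laplacian $L=sL_0$, and let $\Sigma$, $\Sigma_0$ denote the steady-state covariances for $L$ and $L_0$ respectively. Then: (i) if $(1+\alpha_\omega)\lambda_{0,n}\le\bar\lambda$, then $(1-\varepsilon^-)\Sigma_0\preceq\Sigma\preceq(1+\varepsilon^+)\Sigma_0$ with $\varepsilon^-=\max_{k\in\{2,\dots,n\}}\chi^+(\lambda_{0,k})$ and $\varepsilon^+=\max_{k\in\{2,\dots,n\}}\chi^-(\lambda_{0,k})$; (ii) if $(1-\alpha_\omega)\lambda_{0,2}\ge\bar\lambda$, then $(1-\varepsilon^-)\Sigma_0\preceq\Sigma\preceq(1+\varepsilon^+)\Sigma_0$ with $\varepsilon^+=\max_{k\in\{2,\dots,n\}}\chi^+(\lambda_{0,k})$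 and $\varepsilon^-=\max_{k\in\{2,\dots,n\}}\chi^-(\lambda_{0,k})$.
   Context: Network: $\mathrm dx_t=-L\,x_{t-\tau}\,\mathrm dt+b\,\mathrm dw_t$ with $w_t$ standard $n$-dimensional Brownian motion. Writing $L=Q\Lambda Q^\top$ with $Q=[q_1|\dots|q_n]$ orthogonal, $q_1=\mathbf 1_n/\sqrt n$, $\Lambda=\mathrm{diag}(0,\lambda_2,\dots,\lambda_n)$, $\lambda_n\tau<\pi/2$, the observables $y=M_nx$, $M_n=I_n-\frac1n\mathbf 1_n\mathbf 1_n^\top$, have steady-state law $\mathcal N(0,\Sigma)$ with $\Sigma=b^2M_nQ\,\mathrm{diag}\big(0,\tfrac12f_\tau(\lambda_2),\dots,\tfrac12f_\tau(\lambda_n)\big)Q^\top M_n$. $A\preceq B$ means $B-A$ is positive semidefinite. *)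

theory Defs
  imports Complex_Main
begin

text \<open>Matrices of size n x n are represented as functions nat => nat => real,
  with indices 0..n-1 (vertex i of the paper is index i-1).\<close>

definition mmul :: "nat \<Rightarrow> (nat \<Rightarrow> nat \<Rightarrow> real) \<Rightarrow> (nat \<Rightarrow> nat \<Rightarrow> real) \<Rightarrow> (nat \<Rightarrow> nat \<Rightarrow> real)" where
  "mmul n A B = (\<lambda>i j. \<Sum>k<n. A i k * B k j)"

definition mtrans :: "(nat \<Rightarrow> nat \<Rightarrow> real) \<Rightarrow> (nat \<Rightarrow> nat \<Rightarrow> real)" where
  "mtrans A = (\<lambda>i j. A j i)"

definition mdiag :: "(nat \<Rightarrow> real) \<Rightarrow> (nat \<Rightarrow> nat \<Rightarrow> real)" where
  "mdiag d = (\<lambda>i j. if i = j then d i else 0)"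

definition mscale :: "real \<Rightarrow> (nat \<Rightarrow> nat \<Rightarrow> real) \<Rightarrow> (nat \<Rightarrow> nat \<Rightarrow> real)" where
  "mscale c A = (\<lambda>i j. c * A i j)"

definition centering :: "nat \<Rightarrow> (nat \<Rightarrow> nat \<Rightarrow> real)" where
  "centering n = (\<lambda>i j. (if i = j then 1 else 0) - 1 / real n)"

definition loewner_le :: "nat \<Rightarrow> (nat \<Rightarrow> nat \<Rightarrow> real) \<Rightarrow> (nat \<Rightarrow> nat \<Rightarrow> real) \<Rightarrow> bool" where
  "loewner_le n A B \<longleftrightarrow> (\<forall>x :: nat \<Rightarrow> real. 0 \<le> (\<Sum>i<n. \<Sum>j<n. x i * (B i j - A i j) * x j))"

text \<open>Weighted graph Laplacian of a symmetric weight function w (w i j > 0 iff {i,j} is an edge).\<close>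
definition laplacian :: "nat \<Rightarrow> (nat \<Rightarrow> nat \<Rightarrow> real) \<Rightarrow> (nat \<Rightarrow> nat \<Rightarrow> real)" where
  "laplacian n w = (\<lambda>i j. if i = j then (\<Sum>k<n. w i k) else - w i j)"

definition weighted_simple_graph :: "nat \<Rightarrow> (nat \<Rightarrow> nat \<Rightarrow> real) \<Rightarrow> bool" where
  "weighted_simple_graph n w \<longleftrightarrow>
     (\<forall>i j. w i j = w j i) \<and> (\<forall>i. w i i = 0) \<and> (\<forall>i j. 0 \<le> w i j) \<and>
     (\<forall>i j. (i \<ge> n \<or> j \<ge> n) \<longrightarrow> w i j = 0)"

definition graph_connected :: "nat \<Rightarrow> (nat \<Rightarrow> nat \<Rightarrow> real) \<Rightarrow> bool" where
  "graph_connected n w \<longleftrightarrow>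
     (\<forall>i<n. \<forall>j<n. (i, j) \<in> {(a, b). a < n \<and> b < n \<and> 0 < w a b}\<^sup>*)"

definition f_tau :: "real \<Rightarrow> real \<Rightarrow> real" where
  "f_tau tau lam = cos (lam * tau) / (lam * (1 - sin (lam * tau)))"

definition chi_plus :: "real \<Rightarrow> real \<Rightarrow> real \<Rightarrow> real" where
  "chi_plus tau a lam = \<bar>f_tau tau ((1 + a) * lam) - f_tau tau lam\<bar> / f_tau tau lam"

definition chi_minus :: "real \<Rightarrow> real \<Rightarrow> real \<Rightarrow> real" where
  "chi_minus tau a lam = \<bar>f_tau tau ((1 - a) * lam) - f_tau tau lam\<bar> / f_tau tau lam"

text \<open>Steady-state covariance b^2 M_n Q diag(0, f(lam_2)/2, ..., f(lam_n)/2) Q^T M_n,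
  for the decomposition L = Q diag(lam) Q^T (lam 0 = 0 is the zero eigenvalue).\<close>
definition steady_cov :: "nat \<Rightarrow> real \<Rightarrow> real \<Rightarrow> (nat \<Rightarrow> nat \<Rightarrow> real) \<Rightarrow> (nat \<Rightarrow> real) \<Rightarrow> (nat \<Rightarrow> nat \<Rightarrow> real)" where
  "steady_cov n tau b Q lam =
     mscale (b\<^sup>2) (mmul n (mmul n (mmul n (mmul n (centering n) Q)
        (mdiag (\<lambda>k. if k = 0 then 0 else f_tau tau (lam k) / 2))) (mtrans Q)) (centering n))"

end

theory Submission
  imports Defs
begin

(* Writing R = M_n Q, the steady-state covariance is b^2 R diag(0, f_tau(lambda_k)/2) R^T, so each
   Loewner bound reduces to the scalar bounds f_tau(s lambda_k) vs. c f_tau(lambda_k) on the modes.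
   The derivative of f_tau has the sign of lambda tau - cos (lambda tau), which is increasing;
   hence the minimiser lbar solves lbar tau = cos (lbar tau), and f_tau decreases on (0, lbar]
   and increases on [lbar, pi/(2 tau)).  In case (i) the whole interval [(1-alpha) lambda,
   (1+alpha) lambda] lies left of lbar, so f_tau(s lambda) lies between f_tau((1+alpha) lambda)
   and f_tau((1-alpha) lambda), whose relative deviations from f_tau(lambda) are chi^+ and chi^-;
   case (ii) is the mirror image. *)

lemma sin_less_one:
  fixes x :: real
  assumes "x < pi / 2" "- (pi / 2) \<le> x"
  shows "sin x < 1"
  using sin_monotone_2pi[OF assms(2,1)] by simp

lemma f_tau_has_derivative:
  assumes "0 < tau" "0 < l" "l * tau < pi / 2"
  shows "(f_tau tau has_real_derivative
           (l * tau - cos (l * tau)) / (l\<^sup>2 * (1 - sin (l * tau)))) (at l)"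
proof -
  have "0 < l * tau" using assms by simp
  then have s: "sin (l * tau) < 1" using assms(3) by (intro sin_less_one) auto
  have "((\<lambda>x. cos (x * tau) / (x * (1 - sin (x * tau)))) has_real_derivative
     ((- sin (l * tau) * tau) * (l * (1 - sin (l * tau)))
       - cos (l * tau) * ((1 - sin (l * tau)) + l * (- cos (l * tau) * tau)))
     / (l * (1 - sin (l * tau)))\<^sup>2) (at l)"
    using assms s by (auto intro!: derivative_eq_intros simp: power2_eq_square algebra_simps)
  moreover have "((- sin (l * tau) * tau) * (l * (1 - sin (l * tau)))
       - cos (l * tau) * ((1 - sin (l * tau)) + l * (- cos (l * tau) * tau)))
     / (l * (1 - sin (l * tau)))\<^sup>2
     = (l * tau - cos (l * tau)) / (l\<^sup>2 * (1 - sin (l * tau)))"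
  proof -
    have "(cos (l * tau))\<^sup>2 = 1 - (sin (l * tau))\<^sup>2" by (simp add: cos_squared_eq)
    then have "(- sin (l * tau) * tau) * (l * (1 - sin (l * tau)))
       - cos (l * tau) * ((1 - sin (l * tau)) + l * (- cos (l * tau) * tau))
       = (1 - sin (l * tau)) * (l * tau - cos (l * tau))" by algebra
    moreover have "u * g / (l * u)\<^sup>2 = g / (l\<^sup>2 * u)" if "u \<noteq> 0" for u g :: real
      using that by (simp add: power2_eq_square)
    ultimately show ?thesis using s by simp
  qed
  ultimately show ?thesis by (simp add: f_tau_def[abs_def])
qed

lemma f_tau_pos:
  assumes "0 < tau" "0 < l" "l * tau < pi / 2"
  shows "0 < f_tau tau l"
proof -
  have "0 < l * tau" using assms by simp
  then have "0 < cos (l * tau)" and "sin (l * tau) < 1"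
    using assms(3) by (auto intro: cos_gt_zero sin_less_one)
  then show ?thesis using assms(2) by (simp add: f_tau_def)
qed

lemma f_tau_nonneg:
  assumes "0 < tau" "0 \<le> l" "l * tau < pi / 2"
  shows "0 \<le> f_tau tau l"
  using f_tau_pos[OF assms(1) _ assms(3)] assms(2) by (cases "l = 0") (auto simp: f_tau_def)

lemma f_tau_minimizer_fixed_point:
  assumes tau: "0 < tau" and lbar: "0 < lbar" "lbar < pi / (2 * tau)"
    and lbar_min: "\<forall>l. 0 < l \<longrightarrow> l < pi / (2 * tau) \<longrightarrow> f_tau tau lbar \<le> f_tau tau l"
  shows "lbar * tau = cos (lbar * tau)"
proof -
  have lt: "lbar * tau < pi / 2" using lbar tau by (simp add: field_simps)
  have "(lbar * tau - cos (lbar * tau)) / (lbar\<^sup>2 * (1 - sin (lbar * tau))) = 0"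
  proof (rule DERIV_local_min[OF f_tau_has_derivative[OF tau lbar(1) lt]])
    show "0 < min lbar (pi / (2 * tau) - lbar)" using lbar by simp
    show "\<forall>y. \<bar>lbar - y\<bar> < min lbar (pi / (2 * tau) - lbar) \<longrightarrow> f_tau tau lbar \<le> f_tau tau y"
      using lbar_min by (auto simp: abs_if)
  qed
  moreover have "sin (lbar * tau) < 1"
    using lt lbar tau by (intro sin_less_one) (auto intro: order_trans[of _ 0])
  ultimately show ?thesis using lbar(1) by simp
qed

lemma f_tau_antimono_below_fixed_point:
  assumes tau: "0 < tau" and fixed: "lbar * tau = cos (lbar * tau)" and lt: "lbar * tau < pi / 2"
    and ab: "0 < a" "a \<le> b" "b \<le> lbar"
  shows "f_tau tau b \<le> f_tau tau a"
proof (rule deriv_nonpos_imp_antimono[of a b "f_tau tau"])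
  fix x assume "x \<in> {a..b}"
  then have x0: "0 < x" and xl: "x * tau \<le> lbar * tau" using ab tau by auto
  have x0': "0 < x * tau" using x0 tau by simp
  have xt: "x * tau < pi / 2" using xl lt by linarith
  have "x * tau - cos (x * tau) \<le> lbar * tau - cos (lbar * tau)"
    using cos_monotone_0_pi_le[of "x * tau" "lbar * tau"] xl x0' lt by linarith
  then have num: "x * tau - cos (x * tau) \<le> 0" using fixed by simp
  have "sin (x * tau) < 1" using xt x0' by (intro sin_less_one) auto
  then show "(x * tau - cos (x * tau)) / (x\<^sup>2 * (1 - sin (x * tau))) \<le> 0"
    using num x0 by (intro divide_nonpos_pos) auto
  show "(f_tau tau has_real_derivative
      (x * tau - cos (x * tau)) / (x\<^sup>2 * (1 - sin (x * tau)))) (at x)"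
    by (rule f_tau_has_derivative[OF tau x0 xt])
qed (use ab in auto)

lemma f_tau_mono_above_fixed_point:
  assumes tau: "0 < tau" and fixed: "lbar * tau = cos (lbar * tau)" and "0 < lbar"
    and ab: "lbar \<le> a" "a \<le> b" "b * tau < pi / 2"
  shows "f_tau tau a \<le> f_tau tau b"
proof (rule deriv_nonneg_imp_mono[of a b "f_tau tau"])
  fix x assume "x \<in> {a..b}"
  then have x0: "0 < x" and xl: "lbar * tau \<le> x * tau" and xb: "x * tau \<le> b * tau"
    using ab tau \<open>0 < lbar\<close> by auto
  have x0': "0 < x * tau" using x0 tau by simp
  have xt: "x * tau < pi / 2" using xb ab(3) by linarith
  have "lbar * tau - cos (lbar * tau) \<le> x * tau - cos (x * tau)"
  proof -
    have "0 \<le> lbar * tau" using \<open>0 < lbar\<close> tau by simp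
    then have "cos (x * tau) \<le> cos (lbar * tau)"
      using xl xt pi_gt_zero by (intro cos_monotone_0_pi_le) linarith+
    then show ?thesis using xl by linarith
  qed
  then have num: "0 \<le> x * tau - cos (x * tau)" using fixed by simp
  have "sin (x * tau) < 1" using xt x0' by (intro sin_less_one) auto
  then show "0 \<le> (x * tau - cos (x * tau)) / (x\<^sup>2 * (1 - sin (x * tau)))"
    using num x0 by (intro divide_nonneg_pos) auto
  show "(f_tau tau has_real_derivative
      (x * tau - cos (x * tau)) / (x\<^sup>2 * (1 - sin (x * tau)))) (at x)"
    by (rule f_tau_has_derivative[OF tau x0 xt])
qed (use ab in auto)

lemma relative_deviation_lower:
  fixes F X Y :: real
  assumes "0 < F" "X \<le> Y"
  shows "(1 - \<bar>X - F\<bar> / F) * F \<le> Y"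
  using assms by (simp add: algebra_simps)

lemma relative_deviation_upper:
  fixes F X Y :: real
  assumes "0 < F" "Y \<le> X"
  shows "Y \<le> (1 + \<bar>X - F\<bar> / F) * F"
  using assms by (simp add: algebra_simps)

lemma f_tau_scaled_bounds_below_fixed_point:
  assumes tau: "0 < tau" and fixed: "lbar * tau = cos (lbar * tau)" and lt: "lbar * tau < pi / 2"
    and alpha: "0 \<le> alpha" "alpha < 1" and s: "1 - alpha \<le> s" "s \<le> 1 + alpha"
    and l: "0 \<le> l" "(1 + alpha) * l \<le> lbar"
  shows "(1 - chi_plus tau alpha l) * f_tau tau l \<le> f_tau tau (s * l)
    \<and> f_tau tau (s * l) \<le> (1 + chi_minus tau alpha l) * f_tau tau l"
proof (cases "l = 0")
  case True
  (* f_tau tau 0 = 0 (division by zero), so a zero eigenvalue, which connectedness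
     would exclude, is harmless *)
  then show ?thesis by (simp add: f_tau_def)
next
  case False
  then have l0: "0 < l" using l by simp
  have "0 < (1 - alpha) * l" "(1 - alpha) * l \<le> s * l" "s * l \<le> (1 + alpha) * l"
    using alpha s l0 by (auto intro: mult_right_mono)
  then have up: "f_tau tau ((1 + alpha) * l) \<le> f_tau tau (s * l)"
    and lo: "f_tau tau (s * l) \<le> f_tau tau ((1 - alpha) * l)"
    using l(2) by (auto intro!: f_tau_antimono_below_fixed_point[OF tau fixed lt])
  have "l \<le> (1 + alpha) * l" using alpha l0 by simp
  then have "l * tau \<le> lbar * tau" using l(2) tau by (intro mult_right_mono) auto
  then have "l * tau < pi / 2" using lt by linarith
  then have "0 < f_tau tau l" by (rule f_tau_pos[OF tau l0])
  then show ?thesis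
    unfolding chi_plus_def chi_minus_def
    using relative_deviation_lower[OF _ up] relative_deviation_upper[OF _ lo] by simp
qed

lemma f_tau_scaled_bounds_above_fixed_point:
  assumes tau: "0 < tau" and fixed: "lbar * tau = cos (lbar * tau)" and "0 < lbar"
    and alpha: "0 \<le> alpha" "alpha < 1" and s: "1 - alpha \<le> s" "s \<le> 1 + alpha"
    and l: "lbar \<le> (1 - alpha) * l" "(1 + alpha) * l * tau < pi / 2"
  shows "(1 - chi_minus tau alpha l) * f_tau tau l \<le> f_tau tau (s * l)
    \<and> f_tau tau (s * l) \<le> (1 + chi_plus tau alpha l) * f_tau tau l"
proof -
  have "0 < (1 - alpha) * l" using l(1) \<open>0 < lbar\<close> by linarith
  then have l0: "0 < l" using alpha by (simp add: zero_less_mult_iff)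
  have "(1 - alpha) * l \<le> s * l" "s * l \<le> (1 + alpha) * l"
    using s l0 by (auto intro: mult_right_mono)
  moreover have "s * l * tau \<le> (1 + alpha) * l * tau"
    using mult_right_mono[OF calculation(2), of tau] tau by simp
  ultimately have lo: "f_tau tau ((1 - alpha) * l) \<le> f_tau tau (s * l)"
    and up: "f_tau tau (s * l) \<le> f_tau tau ((1 + alpha) * l)"
    using l by (auto intro!: f_tau_mono_above_fixed_point[OF tau fixed \<open>0 < lbar\<close>])
  have "l * tau \<le> (1 + alpha) * l * tau" using alpha l0 tau by simp
  then have "0 < f_tau tau l" using l(2) by (intro f_tau_pos[OF tau l0]) linarith
  then show ?thesis
    unfolding chi_plus_def chi_minus_def
    using relative_deviation_lower[OF _ lo] relative_deviation_upper[OF _ up] by simp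
qed

definition quad_form :: "nat \<Rightarrow> (nat \<Rightarrow> nat \<Rightarrow> real) \<Rightarrow> (nat \<Rightarrow> real) \<Rightarrow> real" where
  "quad_form n A x = (\<Sum>i<n. \<Sum>j<n. x i * A i j * x j)"

lemma loewner_le_iff_quad_form:
  "loewner_le n A B \<longleftrightarrow> (\<forall>x. quad_form n A x \<le> quad_form n B x)"
  by (simp add: loewner_le_def quad_form_def algebra_simps sum_subtractf)

lemma quad_form_mscale: "quad_form n (mscale c A) x = c * quad_form n A x"
  by (simp add: quad_form_def mscale_def sum_distrib_left mult_ac)

lemma mscale_one [simp]: "mscale 1 A = A"
  by (simp add: mscale_def)

lemma mmul_assoc: "mmul n (mmul n A B) C = mmul n A (mmul n B C)"
proof -
  have "(\<Sum>k<n. (\<Sum>m<n. A i m * B m k) * C k j) = (\<Sum>m<n. A i m * (\<Sum>k<n. B m k * C k j))" for i j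
  proof -
    have "(\<Sum>k<n. (\<Sum>m<n. A i m * B m k) * C k j) = (\<Sum>k<n. \<Sum>m<n. A i m * (B m k * C k j))"
      by (simp add: sum_distrib_right mult.assoc)
    also have "\<dots> = (\<Sum>m<n. \<Sum>k<n. A i m * (B m k * C k j))"
      by (rule sum.swap)
    finally show ?thesis by (simp add: sum_distrib_left)
  qed
  then show ?thesis by (simp add: mmul_def)
qed

lemma mtrans_mmul: "mtrans (mmul n A B) = mmul n (mtrans B) (mtrans A)"
  by (simp add: mtrans_def mmul_def mult_ac)

lemma mtrans_centering [simp]: "mtrans (centering n) = centering n"
  by (auto simp: mtrans_def centering_def fun_eq_iff)

lemma mmul_mdiag_mtrans:
  "mmul n (mmul n R (mdiag d)) (mtrans R) i j = (\<Sum>p<n. R i p * d p * R j p)"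
  by (simp add: mmul_def mdiag_def mtrans_def if_distrib[of "\<lambda>z. _ * z"] cong: if_cong)

lemma quad_form_sum_squares:
  assumes "\<forall>i<n. \<forall>j<n. A i j = (\<Sum>p<n. R i p * d p * R j p)"
  shows "quad_form n A x = (\<Sum>p<n. d p * (\<Sum>i<n. x i * R i p)\<^sup>2)"
proof -
  have "quad_form n A x = (\<Sum>i<n. \<Sum>j<n. \<Sum>p<n. d p * (x i * R i p) * (x j * R j p))"
    using assms unfolding quad_form_def
    by (intro sum.cong refl) (simp add: sum_distrib_left sum_distrib_right mult_ac)
  also have "\<dots> = (\<Sum>p<n. \<Sum>i<n. \<Sum>j<n. d p * (x i * R i p) * (x j * R j p))"
    by (subst sum.swap, subst (2) sum.swap) (rule refl)
  also have "\<dots> = (\<Sum>p<n. d p * (\<Sum>i<n. x i * R i p)\<^sup>2)"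
    by (simp add: power2_eq_square sum_product sum_distrib_left mult_ac)
  finally show ?thesis .
qed

lemma quad_form_laplacian:
  assumes "weighted_simple_graph n w"
  shows "2 * quad_form n (laplacian n w) x = (\<Sum>i<n. \<Sum>j<n. w i j * (x i - x j)\<^sup>2)"
proof -
  have sym: "w i j = w j i" and diag: "w i i = 0" for i j
    using assms unfolding weighted_simple_graph_def by auto
  have row: "(\<Sum>j<n. x i * laplacian n w i j * x j) = (\<Sum>j<n. w i j * x i * (x i - x j))"
    if "i < n" for i
  proof -
    have "(\<Sum>j<n. x i * laplacian n w i j * x j)
        = (\<Sum>j<n. (if i = j then x i * (\<Sum>k<n. w i k) * x i else 0) - w i j * x i * x j)"
      unfolding laplacian_def using diag by (intro sum.cong) auto
    also have "\<dots> = x i * (\<Sum>k<n. w i k) * x i - (\<Sum>j<n. w i j * x i * x j)"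
      using that by (simp add: sum_subtractf)
    also have "\<dots> = (\<Sum>j<n. w i j * x i * (x i - x j))"
      by (simp add: sum_distrib_left sum_distrib_right sum_subtractf algebra_simps)
    finally show ?thesis .
  qed
  have "quad_form n (laplacian n w) x = (\<Sum>i<n. \<Sum>j<n. w i j * x i * (x i - x j))"
    unfolding quad_form_def by (rule sum.cong) (simp_all add: row)
  moreover have "(\<Sum>i<n. \<Sum>j<n. w i j * x i * (x i - x j)) = (\<Sum>i<n. \<Sum>j<n. w i j * x j * (x j - x i))"
    by (subst sum.swap) (simp add: sym)
  ultimately have "2 * quad_form n (laplacian n w) x
      = (\<Sum>i<n. \<Sum>j<n. w i j * x i * (x i - x j)) + (\<Sum>i<n. \<Sum>j<n. w i j * x j * (x j - x i))"
    by simp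
  also have "\<dots> = (\<Sum>i<n. \<Sum>j<n. w i j * (x i - x j)\<^sup>2)"
    unfolding sum.distrib[symmetric] by (intro sum.cong refl) (simp add: power2_eq_square algebra_simps)
  finally show ?thesis .
qed

lemma quad_form_laplacian_nonneg:
  assumes "weighted_simple_graph n w"
  shows "0 \<le> quad_form n (laplacian n w) x"
proof -
  have "0 \<le> (\<Sum>i<n. \<Sum>j<n. w i j * (x i - x j)\<^sup>2)"
    using assms unfolding weighted_simple_graph_def by (intro sum_nonneg) simp
  then show ?thesis using quad_form_laplacian[OF assms, of x] by simp
qed

lemma quad_form_orthonormal_column:
  assumes Q_orth: "\<forall>i<n. \<forall>j<n. (\<Sum>k<n. Q k i * Q k j) = (if i = j then 1 else 0)"
    and decomp: "\<forall>i<n. \<forall>j<n. A i j = (\<Sum>k<n. Q i k * lam k * Q j k)"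
    and "k < n"
  shows "quad_form n A (\<lambda>i. Q i k) = lam k"
proof -
  have "quad_form n A (\<lambda>i. Q i k) = (\<Sum>p<n. lam p * (\<Sum>i<n. Q i k * Q i p)\<^sup>2)"
    by (rule quad_form_sum_squares[OF decomp])
  also have "\<dots> = (\<Sum>p<n. if p = k then lam p else 0)"
    using Q_orth \<open>k < n\<close> by (intro sum.cong refl) auto
  finally show ?thesis using \<open>k < n\<close> by simp
qed

lemma laplacian_eigenvalue_nonneg:
  assumes "weighted_simple_graph n w"
    and "\<forall>i<n. \<forall>j<n. (\<Sum>k<n. Q k i * Q k j) = (if i = j then 1 else 0)"
    and "\<forall>i<n. \<forall>j<n. laplacian n w i j = (\<Sum>k<n. Q i k * lam k * Q j k)"
    and "k < n"
  shows "0 \<le> lam k"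
  using quad_form_laplacian_nonneg[OF assms(1), of "\<lambda>i. Q i k"]
    quad_form_orthonormal_column[OF assms(2-4)] by simp

lemma quad_form_steady_cov:
  "quad_form n (steady_cov n tau b Q mu) x =
     b\<^sup>2 * (\<Sum>p<n. (if p = 0 then 0 else f_tau tau (mu p) / 2)
                  * (\<Sum>i<n. x i * mmul n (centering n) Q i p)\<^sup>2)"
proof -
  let ?R = "mmul n (centering n) Q"
  have "steady_cov n tau b Q mu =
      mscale (b\<^sup>2) (mmul n (mmul n ?R (mdiag (\<lambda>k. if k = 0 then 0 else f_tau tau (mu k) / 2))) (mtrans ?R))"
    by (simp add: steady_cov_def mmul_assoc mtrans_mmul)
  then show ?thesis
    by (simp add: quad_form_mscale quad_form_sum_squares mmul_mdiag_mtrans)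
qed

lemma loewner_le_steady_cov_scaled:
  assumes "\<forall>k\<in>{1..<n}. c1 * f_tau tau (mu1 k) \<le> c2 * f_tau tau (mu2 k)"
  shows "loewner_le n (mscale c1 (steady_cov n tau b Q mu1)) (mscale c2 (steady_cov n tau b Q mu2))"
  unfolding loewner_le_iff_quad_form quad_form_mscale quad_form_steady_cov
proof
  fix x
  let ?y = "\<lambda>p. (\<Sum>i<n. x i * mmul n (centering n) Q i p)\<^sup>2"
  have "c1 * ((if p = 0 then 0 else f_tau tau (mu1 p) / 2) * ?y p)
      \<le> c2 * ((if p = 0 then 0 else f_tau tau (mu2 p) / 2) * ?y p)" if "p < n" for p
    using assms that mult_right_mono[of "c1 * f_tau tau (mu1 p)" "c2 * f_tau tau (mu2 p)" "?y p"]
    by (auto simp: algebra_simps)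
  then have "c1 * (\<Sum>p<n. (if p = 0 then 0 else f_tau tau (mu1 p) / 2) * ?y p)
      \<le> c2 * (\<Sum>p<n. (if p = 0 then 0 else f_tau tau (mu2 p) / 2) * ?y p)"
    unfolding sum_distrib_left by (rule sum_mono) simp
  then show "c1 * (b\<^sup>2 * (\<Sum>p<n. (if p = 0 then 0 else f_tau tau (mu1 p) / 2) * ?y p))
      \<le> c2 * (b\<^sup>2 * (\<Sum>p<n. (if p = 0 then 0 else f_tau tau (mu2 p) / 2) * ?y p))"
    by (simp only: mult.left_commute[of _ "b\<^sup>2"] mult_left_mono[OF _ zero_le_power2])
qed

lemma steady_cov_loewner_sandwich:
  fixes cl cu :: "nat \<Rightarrow> real"
  assumes bounds: "\<forall>k\<in>{1..<n}. (1 - cl k) * f_tau tau (mu k) \<le> f_tau tau (nu k)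
                                  \<and> f_tau tau (nu k) \<le> (1 + cu k) * f_tau tau (mu k)"
    and nonneg: "\<forall>k\<in>{1..<n}. 0 \<le> f_tau tau (mu k)"
  shows "loewner_le n (mscale (1 - Max (cl ` {1..<n})) (steady_cov n tau b Q mu))
                      (steady_cov n tau b Q nu)
       \<and> loewner_le n (steady_cov n tau b Q nu)
                      (mscale (1 + Max (cu ` {1..<n})) (steady_cov n tau b Q mu))"
proof -
  have "(1 - Max (cl ` {1..<n})) * f_tau tau (mu k) \<le> f_tau tau (nu k)"
    and "f_tau tau (nu k) \<le> (1 + Max (cu ` {1..<n})) * f_tau tau (mu k)" if k: "k \<in> {1..<n}" for k
  proof -
    have "cl k \<le> Max (cl ` {1..<n})" "cu k \<le> Max (cu ` {1..<n})" using k by auto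
    then have "(1 - Max (cl ` {1..<n})) * f_tau tau (mu k) \<le> (1 - cl k) * f_tau tau (mu k)"
      and "(1 + cu k) * f_tau tau (mu k) \<le> (1 + Max (cu ` {1..<n})) * f_tau tau (mu k)"
      using nonneg k by (auto intro!: mult_right_mono)
    then show "(1 - Max (cl ` {1..<n})) * f_tau tau (mu k) \<le> f_tau tau (nu k)"
      and "f_tau tau (nu k) \<le> (1 + Max (cu ` {1..<n})) * f_tau tau (mu k)"
      using bounds k by fastforce+
  qed
  then show ?thesis
    using loewner_le_steady_cov_scaled[of n "1 - Max (cl ` {1..<n})" tau mu 1 nu b Q]
      loewner_le_steady_cov_scaled[of n 1 tau nu "1 + Max (cu ` {1..<n})" mu b Q] by auto
qed

lemma steady_cov_bounds_below_fixed_point: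
  assumes tau: "0 < tau" and fixed: "lbar * tau = cos (lbar * tau)" and lt: "lbar * tau < pi / 2"
    and alpha: "0 \<le> alpha" "alpha < 1" and s: "1 - alpha \<le> s" "s \<le> 1 + alpha"
    and lam: "\<forall>k\<in>{1..<n}. 0 \<le> lam k \<and> (1 + alpha) * lam k \<le> lbar"
  shows "loewner_le n (mscale (1 - Max ((\<lambda>k. chi_plus tau alpha (lam k)) ` {1..<n}))
                        (steady_cov n tau b Q lam)) (steady_cov n tau b Q (\<lambda>k. s * lam k))
       \<and> loewner_le n (steady_cov n tau b Q (\<lambda>k. s * lam k))
           (mscale (1 + Max ((\<lambda>k. chi_minus tau alpha (lam k)) ` {1..<n})) (steady_cov n tau b Q lam))"
proof (rule steady_cov_loewner_sandwich)
  show "\<forall>k\<in>{1..<n}. 0 \<le> f_tau tau (lam k)"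
  proof
    fix k assume "k \<in> {1..<n}"
    then have "0 \<le> lam k" "(1 + alpha) * lam k \<le> lbar" using lam by auto
    moreover have "lam k \<le> (1 + alpha) * lam k" using calculation(1) alpha by (simp add: algebra_simps)
    ultimately have "lam k * tau \<le> lbar * tau" using tau by (intro mult_right_mono) auto
    then show "0 \<le> f_tau tau (lam k)"
      using lt \<open>0 \<le> lam k\<close> by (intro f_tau_nonneg[OF tau]) auto
  qed
qed (use lam f_tau_scaled_bounds_below_fixed_point[OF tau fixed lt alpha s] in auto)

lemma steady_cov_bounds_above_fixed_point:
  assumes tau: "0 < tau" and fixed: "lbar * tau = cos (lbar * tau)" and "0 < lbar"
    and alpha: "0 \<le> alpha" "alpha < 1" and s: "1 - alpha \<le> s" "s \<le> 1 + alpha"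
    and lam: "\<forall>k\<in>{1..<n}. lbar \<le> (1 - alpha) * lam k \<and> (1 + alpha) * lam k * tau < pi / 2"
  shows "loewner_le n (mscale (1 - Max ((\<lambda>k. chi_minus tau alpha (lam k)) ` {1..<n}))
                        (steady_cov n tau b Q lam)) (steady_cov n tau b Q (\<lambda>k. s * lam k))
       \<and> loewner_le n (steady_cov n tau b Q (\<lambda>k. s * lam k))
           (mscale (1 + Max ((\<lambda>k. chi_plus tau alpha (lam k)) ` {1..<n})) (steady_cov n tau b Q lam))"
proof (rule steady_cov_loewner_sandwich)
  show "\<forall>k\<in>{1..<n}. 0 \<le> f_tau tau (lam k)"
  proof
    fix k assume "k \<in> {1..<n}"
    then have "0 < (1 - alpha) * lam k" and stab: "(1 + alpha) * lam k * tau < pi / 2"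
      using lam \<open>0 < lbar\<close> by fastforce+
    then have "0 < lam k" using alpha by (simp add: zero_less_mult_iff)
    moreover have "lam k * tau \<le> (1 + alpha) * lam k * tau"
      using calculation alpha tau by (intro mult_right_mono) auto
    then have "lam k * tau < pi / 2" using stab by linarith
    ultimately show "0 \<le> f_tau tau (lam k)" by (intro f_tau_nonneg[OF tau]) auto
  qed
qed (use lam f_tau_scaled_bounds_above_fixed_point[OF tau fixed \<open>0 < lbar\<close> alpha s] in auto)

theorem proposition4:
  fixes n :: nat and w0 :: "nat \<Rightarrow> nat \<Rightarrow> real" and Q :: "nat \<Rightarrow> nat \<Rightarrow> real"
    and lam :: "nat \<Rightarrow> real" and tau b alpha s lbar :: real
  assumes n2: "2 \<le> n"
    and graph: "weighted_simple_graph n w0"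
    and conn: "graph_connected n w0"
    and Q_orth: "\<forall>i<n. \<forall>j<n. (\<Sum>k<n. Q k i * Q k j) = (if i = j then 1 else 0)"
    and Q_first: "\<forall>i<n. Q i 0 = 1 / sqrt (real n)"
    and decomp: "\<forall>i<n. \<forall>j<n. laplacian n w0 i j = (\<Sum>k<n. Q i k * lam k * Q j k)"
    and lam0: "lam 0 = 0"
    and lam_sorted: "\<forall>i j. 1 \<le> i \<longrightarrow> i \<le> j \<longrightarrow> j < n \<longrightarrow> lam i \<le> lam j"
    and tau: "0 < tau" and b: "b \<noteq> 0"
    and alpha: "0 \<le> alpha" "alpha < 1"
    and stab: "(1 + alpha) * lam (n - 1) * tau < pi / 2"
    and lbar: "0 < lbar" "lbar < pi / (2 * tau)"
    and lbar_min: "\<forall>l. 0 < l \<longrightarrow> l < pi / (2 * tau) \<longrightarrow> f_tau tau lbar \<le> f_tau tau l"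
    and s: "1 - alpha \<le> s" "s \<le> 1 + alpha"
  shows
    "((1 + alpha) * lam (n - 1) \<le> lbar \<longrightarrow>
       (let em = Max ((\<lambda>k. chi_plus tau alpha (lam k)) ` {1..<n});
            ep = Max ((\<lambda>k. chi_minus tau alpha (lam k)) ` {1..<n})
        in loewner_le n (mscale (1 - em) (steady_cov n tau b Q lam))
                        (steady_cov n tau b Q (\<lambda>k. s * lam k)) \<and>
           loewner_le n (steady_cov n tau b Q (\<lambda>k. s * lam k))
                        (mscale (1 + ep) (steady_cov n tau b Q lam)))) \<and>
     ((1 - alpha) * lam 1 \<ge> lbar \<longrightarrow>
       (let ep = Max ((\<lambda>k. chi_plus tau alpha (lam k)) ` {1..<n});
            em = Max ((\<lambda>k. chi_minus tau alpha (lam k)) ` {1..<n})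
        in loewner_le n (mscale (1 - em) (steady_cov n tau b Q lam))
                        (steady_cov n tau b Q (\<lambda>k. s * lam k)) \<and>
           loewner_le n (steady_cov n tau b Q (\<lambda>k. s * lam k))
                        (mscale (1 + ep) (steady_cov n tau b Q lam))))"
proof -
  have fixed: "lbar * tau = cos (lbar * tau)"
    by (rule f_tau_minimizer_fixed_point[OF tau lbar lbar_min])
  have lbar_lt: "lbar * tau < pi / 2" using lbar tau by (simp add: field_simps)
  have lam_nonneg: "0 \<le> lam k" if "k < n" for k
    by (rule laplacian_eigenvalue_nonneg[OF graph Q_orth decomp that])
  have lam_range: "lam 1 \<le> lam k" "lam k \<le> lam (n - 1)" if "k \<in> {1..<n}" for k
    using lam_sorted that by auto
  have "\<forall>k\<in>{1..<n}. 0 \<le> lam k \<and> (1 + alpha) * lam k \<le> lbar"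
    if "(1 + alpha) * lam (n - 1) \<le> lbar"
    using lam_nonneg mult_left_mono[OF lam_range(2), of _ "1 + alpha"] alpha that
    by (smt (verit) atLeastLessThan_iff)
  moreover have "\<forall>k\<in>{1..<n}. lbar \<le> (1 - alpha) * lam k \<and> (1 + alpha) * lam k * tau < pi / 2"
    if "lbar \<le> (1 - alpha) * lam 1"
    using mult_left_mono[OF lam_range(1), of _ "1 - alpha"]
      mult_right_mono[OF mult_left_mono[OF lam_range(2)], of _ "1 + alpha" tau] alpha tau stab that
    by (smt (verit) atLeastLessThan_iff)
  ultimately show ?thesis
    unfolding Let_def
    using steady_cov_bounds_below_fixed_point[OF tau fixed lbar_lt alpha s]
      steady_cov_bounds_above_fixed_point[OF tau fixed lbar(1) alpha s] by blast
qed

end
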